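(* Let $m\ge 2$ be an integer and let $\gamma\neq 0$, $u\neq 0$ be real numbers. For $\kappa=k_x+ik_y\in\mathbb C$ (identified with $(k_x,k_y)\in\mathbb R^2$), let $\hat H(\kappa,\gamma,u)$ be the $2m\times 2m$ Hermitian matrix described in the context, and for real $k$ write $\hat H(k,\gamma,u)$ for this matrix at $\kappa=k$ (i.e. $k_x=k$, $k_y=0$). Let $\kappa=ke^{i\theta}$ with $k\ge 0$, $\theta\in[0,2\pi)$. Then $$U^*(\theta)\,\hat H(\kappa,\gamma,u)\,U(\theta)=\hat H(k,\gamma,u),\qquad G_1\,\hat H(k,\gamma,u)\,G_1=\hat H(k,\gamma,-u),$$ $$G_1\Gamma_3\big(-\hat H(k,\gamma,u)\big)\Gamma_3G_1=\hat H(k,\gamma,u),\qquad \Gamma_3\,\hat H(k,\gamma,u)\,\Gamma_3=\hat H(-k,-\gamma,u),$$ where the last three identities hold for all real $k$.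
   Context: Let $\sigma_1=\begin{pmatrix}0&1\\1&0\end{pmatrix}$, $\sigma_3=\begin{pmatrix}1&0\\0&-1\end{pmatrix}$, $A=\begin{pmatrix}0&0\\1&0\end{pmatrix}$. For $1\le j\le m$ set $u_j=\frac{u}{m-1}\big(j-\frac{m+1}{2}\big)$. The matrix $\hat H(\kappa,\gamma,u)$ is the $2m\times 2m$ matrix written in $m\times m$ blocks of size $2\times 2$: the $j$-th diagonal block is $u_jI_2+\begin{pmatrix}0&\bar\kappa\\ \kappa&0\end{pmatrix}$ (i.e. $u_jI_2+k_x\sigma_1+k_y\sigma_2$), the block in position $(j,j+1)$ is $\gamma A$, the block in position $(j+1,j)$ is $\gamma A^*$ ($1\le j\le m-1$), and all other blocks vanish. (This is the Fourier symbol of an effective Dirac model of $m$-layer rhombohedral graphene with valley index $+1$, unit Fermi velocity and AB stacking.) $U(\theta)$ is the diagonal unitary matrix $\mathrm{Diag}(1,e^{i\theta},e^{i\theta},e^{2i\theta},e^{2i\theta},\ldots,e^{i(m-1)\theta},e^{i(m-1)\theta},e^{im\theta})$ (diagonal exponents $0,1,1,2,2,\ldots,m-1,m-1,m$). $\Gamma_3$ is the $2m\times2m$ block-diagonal matrix with all diagonal blocks equal to $\sigma_3$, and $G_1$ is the $2m\times 2m$ block matrix with $\sigma_1$ in each block-antidiagonal position $(j,m+1-j)$, $1\le j\le m$, and zero blocks elsewhere. *)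

theory Defs
  imports Complex_Main "Jordan_Normal_Form.Schur_Decomposition"
begin

text \<open>All matrices are 2m x 2m complex matrices (Jordan_Normal_Form mat), indexed from 0.
 Row/column index r belongs to the 2x2 block  r div 2  (0-based block j corresponds to the
 paper's block j+1) and has position  r mod 2  inside the block.\<close>

definition layer_pot :: "nat \<Rightarrow> real \<Rightarrow> nat \<Rightarrow> real" where
  "layer_pot m u j = u / (real m - 1) * (real (j + 1) - (real m + 1) / 2)"

definition Hhat :: "nat \<Rightarrow> complex \<Rightarrow> real \<Rightarrow> real \<Rightarrow> complex mat" where
  "Hhat m \<kappa> \<gamma> u = mat (2*m) (2*m) (\<lambda>(r, c).
     let j = r div 2; l = c div 2; a = r mod 2; b = c mod 2 in
     (if l = j then
        (if a = b then complex_of_real (layer_pot m u j)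
         else if a = 0 then cnj \<kappa> else \<kappa>)
      else if l = j + 1 then
        (if a = 1 \<and> b = 0 then complex_of_real \<gamma> else 0)
      else if j = l + 1 then
        (if a = 0 \<and> b = 1 then complex_of_real \<gamma> else 0)
      else 0))"

definition Umat :: "nat \<Rightarrow> real \<Rightarrow> complex mat" where
  "Umat m \<theta> = mat (2*m) (2*m) (\<lambda>(r, c).
     if r = c then cis (real ((r + 1) div 2) * \<theta>) else 0)"

definition Gamma3 :: "nat \<Rightarrow> complex mat" where
  "Gamma3 m = mat (2*m) (2*m) (\<lambda>(r, c).
     if r = c then (if even r then 1 else -1) else 0)"

definition G1 :: "nat \<Rightarrow> complex mat" where
  "G1 m = mat (2*m) (2*m) (\<lambda>(r, c).
     if c div 2 + r div 2 = m - 1 \<and> r mod 2 \<noteq> c mod 2 then 1 else 0)"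

end

theory Submission
  imports Defs
begin

(* Conjugating by diagonal matrices multiplies entry (r, c)
   by conj(d r) * d c: the phases of U(theta) are chosen so that both ends of each gamma-hopping
   carry the same phase while the intralayer entry cnj kappa gains exactly cis theta, which
   cancels the phase of kappa. G1 is the exchange matrix; reversing all indices swaps layer j
   with layer m+1-j (so u_j becomes -u_{m+1-j}) and swaps the two sublattices, which maps the
   interlayer blocks gamma A onto themselves. Gamma3 flips the sign of every entry connecting the
   two sublattices, i.e. of kappa and gamma. The chiral identity combines the last two with
   H(-kappa, -gamma, -u) = -H(kappa, gamma, u). *)

lemma mat_diag_sandwich:
  fixes A :: "'a :: semiring_0 mat"
  assumes "A \<in> carrier_mat n n"
  shows "mat_diag n f * A * mat_diag n g = mat n n (\<lambda>(i, j). f i * A $$ (i, j) * g j)"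
  using assms by (auto simp: mat_diag_mult_left mat_diag_mult_right[of _ n] intro!: eq_matI)

lemma mat_adjoint_mat_diag:
  "mat_adjoint (mat_diag n f) = mat_diag n (\<lambda>i. conjugate (f i))"
  by (rule eq_matI) (auto simp: mat_adjoint_def mat_diag_def mat_of_rows_def)

definition exchange_mat :: "nat \<Rightarrow> 'a :: {zero, one} mat" where
  "exchange_mat n = mat n n (\<lambda>(i, j). if j = n - 1 - i then 1 else 0)"

lemma exchange_mat_carrier [simp]: "exchange_mat n \<in> carrier_mat n n"
  by (simp add: exchange_mat_def)

lemma exchange_mat_mult_left:
  fixes A :: "'a :: semiring_1 mat"
  assumes "A \<in> carrier_mat n nc"
  shows "exchange_mat n * A = mat n nc (\<lambda>(i, j). A $$ (n - 1 - i, j))"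
proof (rule eq_matI)
  fix i j assume i: "i < dim_row (mat n nc (\<lambda>(i, j). A $$ (n - 1 - i, j)))"
    and j: "j < dim_col (mat n nc (\<lambda>(i, j). A $$ (n - 1 - i, j)))"
  have "(\<Sum>k<n. (if k = n - 1 - i then 1 else 0) * A $$ (k, j))
      = (\<Sum>k<n. if k = n - 1 - i then A $$ (n - 1 - i, j) else 0)"
    by (intro sum.cong) auto
  also have "\<dots> = A $$ (n - 1 - i, j)" using i by simp
  finally show "(exchange_mat n * A) $$ (i, j) = mat n nc (\<lambda>(i, j). A $$ (n - 1 - i, j)) $$ (i, j)"
    using i j assms by (simp add: exchange_mat_def scalar_prod_def atLeast0LessThan)
qed (use assms in \<open>auto simp: exchange_mat_def\<close>)

lemma exchange_mat_mult_right:
  fixes A :: "'a :: semiring_1 mat"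
  assumes "A \<in> carrier_mat nr n"
  shows "A * exchange_mat n = mat nr n (\<lambda>(i, j). A $$ (i, n - 1 - j))"
proof (rule eq_matI)
  fix i j assume i: "i < dim_row (mat nr n (\<lambda>(i, j). A $$ (i, n - 1 - j)))"
    and j: "j < dim_col (mat nr n (\<lambda>(i, j). A $$ (i, n - 1 - j)))"
  have "(\<Sum>k<n. A $$ (i, k) * (if j = n - 1 - k then 1 else 0))
      = (\<Sum>k<n. if k = n - 1 - j then A $$ (i, n - 1 - j) else 0)"
    using j by (intro sum.cong) auto
  also have "\<dots> = A $$ (i, n - 1 - j)" using j by simp
  finally show "(A * exchange_mat n) $$ (i, j) = mat nr n (\<lambda>(i, j). A $$ (i, n - 1 - j)) $$ (i, j)"
    using i j assms by (simp add: exchange_mat_def scalar_prod_def atLeast0LessThan)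
qed (use assms in \<open>auto simp: exchange_mat_def\<close>)

lemma exchange_mat_sandwich:
  fixes A :: "'a :: semiring_1 mat"
  assumes "A \<in> carrier_mat n n"
  shows "exchange_mat n * A * exchange_mat n = mat n n (\<lambda>(i, j). A $$ (n - 1 - i, n - 1 - j))"
  using assms by (auto simp: exchange_mat_mult_left exchange_mat_mult_right[of _ n] intro!: eq_matI)

lemma mat_eq_blockwiseI:
  assumes "A \<in> carrier_mat (2 * m) (2 * m)" "B \<in> carrier_mat (2 * m) (2 * m)"
    and "\<And>p q a b. p < m \<Longrightarrow> q < m \<Longrightarrow> a < 2 \<Longrightarrow> b < 2 \<Longrightarrow>
           A $$ (2 * p + a, 2 * q + b) = B $$ (2 * p + a, 2 * q + b)"
  shows "A = B"
proof (rule eq_matI)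
  fix i j assume "i < dim_row B" "j < dim_col B"
  then have "i div 2 < m" "j div 2 < m" using assms(2) by auto
  then show "A $$ (i, j) = B $$ (i, j)"
    using assms(3)[of "i div 2" "j div 2" "i mod 2" "j mod 2"] by simp
qed (use assms in auto)

lemma Umat_eq_mat_diag: "Umat m \<theta> = mat_diag (2 * m) (\<lambda>r. cis (real ((r + 1) div 2) * \<theta>))"
  by (rule eq_matI) (auto simp: Umat_def mat_diag_def)

lemma Gamma3_eq_mat_diag: "Gamma3 m = mat_diag (2 * m) (\<lambda>r. if even r then 1 else -1)"
  by (rule eq_matI) (auto simp: Gamma3_def mat_diag_def)

lemma Gamma3_dim [simp]: "dim_row (Gamma3 m) = 2 * m" "dim_col (Gamma3 m) = 2 * m"
  by (simp_all add: Gamma3_def)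

lemma G1_eq_exchange_mat: "G1 m = exchange_mat (2 * m)"
proof (rule eq_matI)
  fix i j assume "i < dim_row (exchange_mat (2 * m) :: complex mat)"
    "j < dim_col (exchange_mat (2 * m) :: complex mat)"
  then have "i < 2 * m" "j < 2 * m" by (auto simp: exchange_mat_def)
  then have "(j div 2 + i div 2 = m - 1 \<and> i mod 2 \<noteq> j mod 2) = (j = 2 * m - 1 - i)"
    by (cases "i mod 2 = 0"; cases "j mod 2 = 0"; auto; arith)
  then show "G1 m $$ (i, j) = exchange_mat (2 * m) $$ (i, j)"
    using \<open>i < 2 * m\<close> \<open>j < 2 * m\<close> by (simp add: G1_def exchange_mat_def)
qed (auto simp: G1_def exchange_mat_def)

lemma G1_dim [simp]: "dim_row (G1 m) = 2 * m" "dim_col (G1 m) = 2 * m"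
  by (simp_all add: G1_def)

lemma layer_pot_uminus: "layer_pot m (-u) j = - layer_pot m u j"
  by (simp add: layer_pot_def)

lemma layer_pot_reflect:
  assumes "p < m"
  shows "layer_pot m (-u) (m - 1 - p) = layer_pot m u p"
proof -
  have reflected: "real (m - 1 - p + 1) = real m - real p"
    using assms by (simp add: of_nat_diff)
  have offset: "real (m - 1 - p + 1) - (real m + 1) / 2 = - (real (p + 1) - (real m + 1) / 2)"
    unfolding reflected by (simp add: field_simps)
  show ?thesis
    unfolding layer_pot_def offset by (simp only: minus_divide_left[symmetric] minus_mult_minus)
qed

lemma Hhat_dim [simp]: "dim_row (Hhat m \<kappa> \<gamma> u) = 2 * m" "dim_col (Hhat m \<kappa> \<gamma> u) = 2 * m"
  by (simp_all add: Hhat_def)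

lemma Hhat_carrier [simp]: "Hhat m \<kappa> \<gamma> u \<in> carrier_mat (2 * m) (2 * m)"
  by auto

lemma Hhat_block_entry:
  assumes "p < m" "q < m" "a < 2" "b < 2"
  shows "Hhat m \<kappa> \<gamma> u $$ (2 * p + a, 2 * q + b) =
    (if q = p then (if a = b then complex_of_real (layer_pot m u p) else if a = 0 then cnj \<kappa> else \<kappa>)
     else if q = p + 1 then (if a = 1 \<and> b = 0 then complex_of_real \<gamma> else 0)
     else if p = q + 1 then (if a = 0 \<and> b = 1 then complex_of_real \<gamma> else 0)
     else 0)"
  using assms by (simp add: Hhat_def Let_def)

lemma Hhat_uminus: "Hhat m (-\<kappa>) (-\<gamma>) (-u) = - Hhat m \<kappa> \<gamma> u"
  by (rule eq_matI) (auto simp: Hhat_def Let_def layer_pot_uminus)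

lemma cis_conj_mult: "cis (- x) * z * cis y = z * cis (y - x)"
  by (simp add: mult.commute mult.left_commute cis_mult)

lemma Hhat_rotation_gauge:
  "mat_adjoint (Umat m \<theta>) * Hhat m (\<kappa> * cis \<theta>) \<gamma> u * Umat m \<theta>
     = Hhat m \<kappa> \<gamma> u"
proof (rule mat_eq_blockwiseI)
  fix p q a b :: nat assume pq: "p < m" "q < m" and ab: "a < 2" "b < 2"
  have half: "(2 * p + a + 1) div 2 = p + a" "(2 * q + b + 1) div 2 = q + b"
    using ab by (auto simp: less_2_cases_iff)
  have phase: "cis (- (real ((2 * p + a + 1) div 2) * \<theta>)) * z * cis (real ((2 * q + b + 1) div 2) * \<theta>)
      = z * cis ((real q - real p + real b - real a) * \<theta>)" for z
    unfolding half cis_conj_mult by (simp add: algebra_simps)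
  have "(mat_adjoint (Umat m \<theta>) * Hhat m (\<kappa> * cis \<theta>) \<gamma> u * Umat m \<theta>) $$ (2 * p + a, 2 * q + b)
      = cis (- (real ((2 * p + a + 1) div 2) * \<theta>)) * Hhat m (\<kappa> * cis \<theta>) \<gamma> u $$ (2 * p + a, 2 * q + b)
          * cis (real ((2 * q + b + 1) div 2) * \<theta>)"
    using pq ab by (simp add: Umat_eq_mat_diag mat_adjoint_mat_diag mat_diag_sandwich cis_cnj)
  also have "\<dots> = Hhat m (\<kappa> * cis \<theta>) \<gamma> u $$ (2 * p + a, 2 * q + b)
      * cis ((real q - real p + real b - real a) * \<theta>)"
    by (rule phase)
  also have "\<dots> = Hhat m \<kappa> \<gamma> u $$ (2 * p + a, 2 * q + b)"
    using pq ab
    by (simp add: Hhat_block_entry) (auto simp: less_2_cases_iff cis_cnj cis_mult mult.assoc)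
  finally show "(mat_adjoint (Umat m \<theta>) * Hhat m (\<kappa> * cis \<theta>) \<gamma> u * Umat m \<theta>)
      $$ (2 * p + a, 2 * q + b) = Hhat m \<kappa> \<gamma> u $$ (2 * p + a, 2 * q + b)" .
qed (simp_all add: Umat_eq_mat_diag mat_adjoint_mat_diag mat_diag_sandwich)

lemma Hhat_layer_reflection:
  "G1 m * Hhat m \<kappa> \<gamma> u * G1 m = Hhat m (cnj \<kappa>) \<gamma> (-u)"
proof (rule mat_eq_blockwiseI)
  fix p q a b :: nat assume pq: "p < m" "q < m" and ab: "a < 2" "b < 2"
  have reversed: "2 * m - 1 - (2 * p + a) = 2 * (m - 1 - p) + (1 - a)"
      "2 * m - 1 - (2 * q + b) = 2 * (m - 1 - q) + (1 - b)"
    using pq ab by arith+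
  have blocks: "(m - 1 - q = m - 1 - p) = (q = p)" "(m - 1 - q = m - 1 - p + 1) = (p = q + 1)"
      "(m - 1 - p = m - 1 - q + 1) = (q = p + 1)"
    using pq by arith+
  have reversed_bounds: "m - 1 - p < m" "m - 1 - q < m" "1 - a < 2" "1 - b < 2"
    using pq by auto
  have pot: "layer_pot m u (m - 1 - p) = layer_pot m (-u) p"
    using layer_pot_reflect[OF pq(1), of "-u"] by simp
  have "(G1 m * Hhat m \<kappa> \<gamma> u * G1 m) $$ (2 * p + a, 2 * q + b)
      = Hhat m \<kappa> \<gamma> u $$ (2 * m - 1 - (2 * p + a), 2 * m - 1 - (2 * q + b))"
    using pq ab by (simp add: G1_eq_exchange_mat exchange_mat_sandwich)
  also have "\<dots> = Hhat m \<kappa> \<gamma> u $$ (2 * (m - 1 - p) + (1 - a), 2 * (m - 1 - q) + (1 - b))"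
    unfolding reversed ..
  also have "\<dots> = Hhat m (cnj \<kappa>) \<gamma> (-u) $$ (2 * p + a, 2 * q + b)"
    unfolding Hhat_block_entry[OF reversed_bounds] Hhat_block_entry[OF pq ab] blocks pot
    using ab by (auto simp: less_2_cases_iff)
  finally show "(G1 m * Hhat m \<kappa> \<gamma> u * G1 m) $$ (2 * p + a, 2 * q + b)
      = Hhat m (cnj \<kappa>) \<gamma> (-u) $$ (2 * p + a, 2 * q + b)" .
qed (simp_all add: G1_eq_exchange_mat exchange_mat_sandwich)

lemma Hhat_sublattice_sign_flip:
  "Gamma3 m * Hhat m \<kappa> \<gamma> u * Gamma3 m = Hhat m (-\<kappa>) (-\<gamma>) u"
proof (rule mat_eq_blockwiseI)
  fix p q a b :: nat assume "p < m" "q < m" "a < 2" "b < 2"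
  then show "(Gamma3 m * Hhat m \<kappa> \<gamma> u * Gamma3 m) $$ (2 * p + a, 2 * q + b)
      = Hhat m (-\<kappa>) (-\<gamma>) u $$ (2 * p + a, 2 * q + b)"
    by (simp add: Gamma3_eq_mat_diag mat_diag_sandwich Hhat_block_entry)
      (auto simp: less_2_cases_iff)
qed (simp_all add: Gamma3_eq_mat_diag mat_diag_sandwich)

lemma Hhat_chiral_symmetry:
  "G1 m * Gamma3 m * (- Hhat m \<kappa> \<gamma> u) * Gamma3 m * G1 m = Hhat m (cnj \<kappa>) \<gamma> u"
proof -
  have G1: "G1 m \<in> carrier_mat (2 * m) (2 * m)" and G3: "Gamma3 m \<in> carrier_mat (2 * m) (2 * m)"
    by auto
  have H: "- Hhat m \<kappa> \<gamma> u \<in> carrier_mat (2 * m) (2 * m)"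
    by (rule uminus_carrier_mat[OF Hhat_carrier])
  have "G1 m * Gamma3 m * (- Hhat m \<kappa> \<gamma> u) * Gamma3 m * G1 m
      = G1 m * (Gamma3 m * (- Hhat m \<kappa> \<gamma> u) * Gamma3 m) * G1 m"
    by (simp only: assoc_mult_mat[OF G1 G3 H] assoc_mult_mat[OF G1 mult_carrier_mat[OF G3 H] G3])
  also have "\<dots> = - (G1 m * (Gamma3 m * Hhat m \<kappa> \<gamma> u * Gamma3 m) * G1 m)"
    by simp
  also have "\<dots> = - Hhat m (- cnj \<kappa>) (-\<gamma>) (-u)"
    by (simp add: Hhat_sublattice_sign_flip Hhat_layer_reflection)
  also have "\<dots> = Hhat m (cnj \<kappa>) \<gamma> u"
    by (simp add: Hhat_uminus)
  finally show ?thesis .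
qed

theorem proposition2p1:
  fixes m :: nat and \<gamma> u k \<theta> :: real
  assumes "m \<ge> 2" and "\<gamma> \<noteq> 0" and "u \<noteq> 0"
  shows "(k \<ge> 0 \<and> 0 \<le> \<theta> \<and> \<theta> < 2 * pi \<longrightarrow>
           mat_adjoint (Umat m \<theta>) * Hhat m (complex_of_real k * cis \<theta>) \<gamma> u * Umat m \<theta>
             = Hhat m (complex_of_real k) \<gamma> u)
       \<and> G1 m * Hhat m (complex_of_real k) \<gamma> u * G1 m = Hhat m (complex_of_real k) \<gamma> (-u)
       \<and> G1 m * Gamma3 m * (- Hhat m (complex_of_real k) \<gamma> u) * Gamma3 m * G1 m
             = Hhat m (complex_of_real k) \<gamma> u
       \<and> Gamma3 m * Hhat m (complex_of_real k) \<gamma> u * Gamma3 m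
             = Hhat m (complex_of_real (-k)) (-\<gamma>) u"
  using Hhat_rotation_gauge[of m \<theta> "complex_of_real k"] Hhat_layer_reflection
    Hhat_chiral_symmetry Hhat_sublattice_sign_flip
  by simp

end
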